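(* Let $\sigma>0$, $\eta>0$, $\hat\alpha>0$, $h>0$, $r\ge0$, $a\in\mathbb{R}$, $\beta\ge0$, and let $v_\beta\in C^1[0,\infty)$ be the unique solution of $\frac{\sigma^2}2v'(y)=\beta+\frac{\hat\alpha}4v(y)^2+\eta y(v(y)-\frac h\eta)-av(y)$, $y\ge0$, $v(0)=-r$. If $y>0$ is a local maximizer of $v_\beta$, then $v_\beta(y)\le h/\eta$. *)

theory Defs
  imports "HOL-Analysis.Analysis"
begin

end

theory Submission
  imports Defs
begin

(* At an interior local maximum y of v we have v' y = 0, so differentiating the ODE at y
   leaves only the term coming from \<eta> t (v t - h / \<eta>): (\<sigma>\<^sup>2/2) v'' y = \<eta> (v y - h / \<eta>).
   If v y > h / \<eta>, then v'' y > 0 and v increases strictly to the right of y,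
   contradicting the local maximality. The argument is purely local. *)

lemma strict_local_min_right_of_critical_point:
  fixes f f' :: "real \<Rightarrow> real"
  assumes "open S" and "y \<in> S"
    and deriv: "\<And>t. t \<in> S \<Longrightarrow> (f has_real_derivative f' t) (at t)"
    and critical: "f' y = 0"
    and second_deriv: "(f' has_real_derivative D) (at y)" and "D > 0"
  shows "\<forall>\<^sub>F z in at_right y. f y < f z"
proof -
  obtain \<delta> where "\<delta> > 0" and \<delta>: "\<And>t. dist t y < \<delta> \<Longrightarrow> t \<in> S"
    using \<open>open S\<close> \<open>y \<in> S\<close> by (metis open_dist)
  obtain d where "d > 0" and d: "\<And>k. 0 < k \<Longrightarrow> k < d \<Longrightarrow> f' y < f' (y + k)"
    using DERIV_pos_inc_right[OF second_deriv \<open>D > 0\<close>] by blast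
  have "f y < f z" if "y < z" "z < y + min \<delta> d" for z
  proof -
    have "(f has_real_derivative f' t) (at t)" if "y \<le> t" "t \<le> z" for t
      using deriv \<delta> that \<open>z < y + min \<delta> d\<close> by (simp add: dist_real_def)
    then obtain \<xi> where "y < \<xi>" "\<xi> < z" and mvt: "f z - f y = (z - y) * f' \<xi>"
      using MVT2[OF \<open>y < z\<close>] by blast
    have "f' \<xi> > 0"
      using d[of "\<xi> - y"] critical \<open>y < \<xi>\<close> \<open>\<xi> < z\<close> that(2) by simp
    with \<open>y < z\<close> have "(z - y) * f' \<xi> > 0"
      by simp
    then show ?thesis
      using mvt by simp
  qed
  moreover have "y < y + min \<delta> d"
    using \<open>\<delta> > 0\<close> \<open>d > 0\<close> by simp
  ultimately show ?thesis
    unfolding eventually_at_right_field by blast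
qed

theorem lemma9:
  fixes \<sigma> \<eta> \<alpha> h r a \<beta> y :: real
    and v v' :: "real \<Rightarrow> real"
  assumes "\<sigma> > 0" and "\<eta> > 0" and "\<alpha> > 0" and "h > 0" and "r \<ge> 0" and "\<beta> \<ge> 0"
    and deriv: "\<And>t. t \<ge> 0 \<Longrightarrow> (v has_real_derivative v' t) (at t within {0..})"
    and cont: "continuous_on {0..} v'"
    and ode: "\<And>t. t \<ge> 0 \<Longrightarrow>
       \<sigma>\<^sup>2 / 2 * v' t = \<beta> + \<alpha> / 4 * (v t)\<^sup>2 + \<eta> * t * (v t - h / \<eta>) - a * v t"
    and init: "v 0 = - r"
    and "y > 0"
    and locmax: "\<exists>e>0. \<forall>z. z \<ge> 0 \<and> \<bar>z - y\<bar> < e \<longrightarrow> v z \<le> v y"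
  shows "v y \<le> h / \<eta>"
proof (rule ccontr)
  assume "\<not> v y \<le> h / \<eta>"
  have deriv_open: "(v has_real_derivative v' t) (at t)" if "t \<in> {0<..}" for t
    using deriv[of t] that at_within_interior[of t "{0..}"] by (simp add: interior_real_atLeast)
  obtain e where "e > 0" and e: "\<And>z. z \<ge> 0 \<Longrightarrow> \<bar>z - y\<bar> < e \<Longrightarrow> v z \<le> v y"
    using locmax by blast
  have critical: "v' y = 0"
    using \<open>y > 0\<close> \<open>e > 0\<close> e
    by (intro DERIV_local_max[OF deriv_open, of y "min e y"]) (auto simp: abs_if)
  define w where "w t = 2 / \<sigma>\<^sup>2 * (\<beta> + \<alpha> / 4 * (v t)\<^sup>2 + \<eta> * t * (v t - h / \<eta>) - a * v t)"
    for t
  have v'_eq_w: "v' t = w t" if "t \<in> {0<..}" for t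
    using ode[of t] that \<open>\<sigma> > 0\<close> by (simp add: w_def field_simps)
  have "(w has_real_derivative 2 / \<sigma>\<^sup>2 * (\<eta> * v y - h)) (at y)"
    unfolding w_def using deriv_open[of y] critical \<open>y > 0\<close> \<open>\<eta> > 0\<close> \<open>\<sigma> > 0\<close>
    by (auto intro!: derivative_eq_intros simp: field_simps)
  then have second_deriv: "(v' has_real_derivative 2 / \<sigma>\<^sup>2 * (\<eta> * v y - h)) (at y)"
    by (rule has_field_derivative_transform_within_open[where S = "{0<..}"])
      (use \<open>y > 0\<close> v'_eq_w in auto)
  have "2 / \<sigma>\<^sup>2 * (\<eta> * v y - h) > 0"
    using \<open>\<not> v y \<le> h / \<eta>\<close> \<open>\<sigma> > 0\<close> \<open>\<eta> > 0\<close> by (simp add: field_simps)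
  with second_deriv have "\<forall>\<^sub>F z in at_right y. v y < v z"
    using strict_local_min_right_of_critical_point[OF open_greaterThan _ deriv_open critical]
      \<open>y > 0\<close> by simp
  moreover have "\<forall>\<^sub>F z in at_right y. v z \<le> v y"
    unfolding eventually_at_right_field using \<open>e > 0\<close> \<open>y > 0\<close>
    by (intro exI[of _ "y + e"]) (auto intro: e)
  ultimately have "\<forall>\<^sub>F z in at_right y. False"
    by (rule eventually_elim2) simp
  then show False
    by simp
qed

end
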